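(* Let $n\ge 0$, put $N=2^n$ and $h={}_0h_n$. Define the words \begin{align*} {}_1h_{n+1}&=\delta_g(h)\,u\,\delta_g(h)\,r\,\delta_x(h)\,d\,\delta_x(h),\\ {}_2h_{n+1}&=\delta_f(h)\,u\,h\,r\,h\,d\,\delta_f(h),\\ {}_3h_{n+1}&=\delta_m(h)\,u\,\delta_g(h)\,r\,\delta_x(h)\,d\,\delta_m(h),\\ {}_4h_{n+1}&=\delta_o(h)\,u\,h\,r\,h\,d\,\delta_f(h),\\ {}_5h_{n+1}&=\delta_m(h)\,u\,\delta_g(h)\,r\,\delta_x(h)\,d\,\delta_x(h). \end{align*} Then each of these words traces a Hamiltonian path of the grid $\{0,\dots,2N-1\}^2$, with the following endpoints: \begin{enumerate} \item ${}_1h_{n+1}$ goes from $(N-1,0)$ to $(N,0)$; the endpoints are adjacent, so this is the closed Moore curve. \item ${}_2h_{n+1}$ goes from $(N-1,N-1)$ to $(N,N-1)$; the endpoints are adjacent. \item ${}_3h_{n+1}$ goes from $(0,N-1)$ to $(2N-1,N-1)$. \item ${}_4h_{n+1}$ goes from $(0,0)$ to $(N,N-1)$. \item ${}_5h_{n+1}$ goes from $(0,N-1)$ to $(N,0)$. \end{enumerate}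
   Context: Let $\Sigma=\{u,d,r,l\}$, where $u$ = up, $d$ = down, $r$ = right and $l$ = left. Set $v(u)=(0,1)$, $v(d)=(0,-1)$, $v(r)=(1,0)$ and $v(l)=(-1,0)$. For a finite word $w=w_1\cdots w_k$ over $\Sigma$ and a point $p\in\mathbb{Z}^2$, the lattice path encoded by $w$ from $p$ is the sequence $p_0=p$, $p_i=p_{i-1}+v(w_i)$ for $i=1,\dots,k$. For $m\ge 1$, say that $w$ traces a Hamiltonian path of the grid $\{0,\dots,m-1\}^2$ from $a$ to $b$ if the path encoded by $w$ from $a$ satisfies three conditions: the points $p_0,\dots,p_k$ are pairwise distinct; $\{p_0,\dots,p_k\}=\{0,\dots,m-1\}^2$, so that $k=m^2-1$; and $p_k=b$. Grid points represent the $m^2$ equal subsquares of the unit square, and consecutive points are edge-adjacent squares. Juxtaposition denotes concatenation of words. The following letter-to-letter morphisms of $\Sigma^*$ are applied letterwise: \begin{itemize} \item $\delta_o$: $u\mapsto r$, $r\mapsto u$, $d\mapsto l$, $l\mapsto d$; \item $\delta_a$: $u\mapsto l$, $r\mapsto d$, $d\mapsto r$, $l\mapsto u$; \item $\delta_g$: $u\mapsto l$, $r\mapsto u$, $d\mapsto r$, $l\mapsto d$; \item $\delta_x$: $u\mapsto r$, $r\mapsto d$, $d\mapsto l$, $l\mapsto u$; \item $\delta_f$: $u\mapsto d$, $r\mapsto l$, $d\mapsto u$, $l\mapsto r$; \item $\delta_m$: $u\mapsto d$, $r\mapsto r$, $d\mapsto u$, $l\mapsto l$. \end{itemize} The Hilbert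 words are defined recursively by ${}_0h_0=\varepsilon$ (the empty word) and \[ {}_0h_{n+1}=\delta_o({}_0h_n)\,u\,{}_0h_n\,r\,{}_0h_n\,d\,\delta_a({}_0h_n). \] For example, ${}_0h_1=urd$. *)

theory Defs
  imports Main
begin

datatype dir = U | D | R | L

fun vec :: "dir \<Rightarrow> int \<times> int" where
  "vec U = (0, 1)" | "vec D = (0, -1)" | "vec R = (1, 0)" | "vec L = (-1, 0)"

fun path_pts :: "int \<times> int \<Rightarrow> dir list \<Rightarrow> (int \<times> int) list" where
  "path_pts p [] = [p]"
| "path_pts p (c # w) = p # path_pts (fst p + fst (vec c), snd p + snd (vec c)) w"

definition traces_ham :: "nat \<Rightarrow> dir list \<Rightarrow> int \<times> int \<Rightarrow> int \<times> int \<Rightarrow> bool" where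
  "traces_ham m w a b \<longleftrightarrow>
     (let ps = path_pts a w in
        distinct ps \<and> set ps = {0..<int m} \<times> {0..<int m} \<and> last ps = b)"

fun delta_o :: "dir \<Rightarrow> dir" where
  "delta_o U = R" | "delta_o R = U" | "delta_o D = L" | "delta_o L = D"
fun delta_a :: "dir \<Rightarrow> dir" where
  "delta_a U = L" | "delta_a R = D" | "delta_a D = R" | "delta_a L = U"
fun delta_g :: "dir \<Rightarrow> dir" where
  "delta_g U = L" | "delta_g R = U" | "delta_g D = R" | "delta_g L = D"
fun delta_x :: "dir \<Rightarrow> dir" where
  "delta_x U = R" | "delta_x R = D" | "delta_x D = L" | "delta_x L = U"
fun delta_f :: "dir \<Rightarrow> dir" where
  "delta_f U = D" | "delta_f R = L" | "delta_f D = U" | "delta_f L = R"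
fun delta_m :: "dir \<Rightarrow> dir" where
  "delta_m U = D" | "delta_m R = R" | "delta_m D = U" | "delta_m L = L"

fun hilb :: "nat \<Rightarrow> dir list" where
  "hilb 0 = []"
| "hilb (Suc n) = map delta_o (hilb n) @ [U] @ hilb n @ [R] @ hilb n @ [D] @ map delta_a (hilb n)"

definition h1 :: "nat \<Rightarrow> dir list" where
  "h1 n = (let h = hilb n in map delta_g h @ [U] @ map delta_g h @ [R] @ map delta_x h @ [D] @ map delta_x h)"
definition h2 :: "nat \<Rightarrow> dir list" where
  "h2 n = (let h = hilb n in map delta_f h @ [U] @ h @ [R] @ h @ [D] @ map delta_f h)"
definition h3 :: "nat \<Rightarrow> dir list" where
  "h3 n = (let h = hilb n in map delta_m h @ [U] @ map delta_g h @ [R] @ map delta_x h @ [D] @ map delta_m h)"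
definition h4 :: "nat \<Rightarrow> dir list" where
  "h4 n = (let h = hilb n in map delta_o h @ [U] @ h @ [R] @ h @ [D] @ map delta_f h)"
definition h5 :: "nat \<Rightarrow> dir list" where
  "h5 n = (let h = hilb n in map delta_m h @ [U] @ map delta_g h @ [R] @ map delta_x h @ [D] @ map delta_x h)"

end

theory Submission
  imports Defs "HOL-Library.Product_Plus"
begin

(* Every word in the theorem has the shape  w1 u w2 r w3 d w4  where each wi is the image of the
   Hilbert word h = 0h_n under one of the letter morphisms delta_*.  Each such morphism is induced
   by an invertible integer linear map A of the plane (a rotation or reflection), so the path of
   delta(h) started at p is the path of h from the origin moved by the rigid motion r |-> p + A r.
   Hence, if h traces a Hamiltonian path of the N x N grid from (0,0) to (N-1,0), each wi traces
   a Hamiltonian path of one N x N quadrant of the 2N x 2N grid, provided the motions send the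
   grid into the quadrants lower-left, upper-left, upper-right, lower-right in this order and the
   connecting letters u, r, d join consecutive pieces.  Distinctness then follows from injectivity
   and disjointness of the quadrants, and coverage from counting (4 N^2 distinct points in a set
   of 4 N^2 points). *)

definition step :: "int \<times> int \<Rightarrow> dir \<Rightarrow> int \<times> int" where
  "step p c = p + vec c"

lemma path_pts_Cons: "path_pts p (c # w) = p # path_pts (step p c) w"
  by (simp add: step_def plus_prod_def)

lemma path_pts_not_Nil: "path_pts p w \<noteq> []"
  by (cases w) auto

lemma path_pts_append:
  "path_pts p (w1 @ c # w2) = path_pts p w1 @ path_pts (step (last (path_pts p w1)) c) w2"
  by (induction w1 arbitrary: p)
    (auto simp: path_pts_Cons path_pts_not_Nil simp del: path_pts.simps(2))

definition lin :: "int \<Rightarrow> int \<Rightarrow> int \<Rightarrow> int \<Rightarrow> int \<times> int \<Rightarrow> int \<times> int" where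
  "lin a b c d q = (a * fst q + b * snd q, c * fst q + d * snd q)"

lemma lin_add: "lin a b c d (p + q) = lin a b c d p + lin a b c d q"
  by (simp add: lin_def algebra_simps)

(* A linear map with nonzero determinant is injective: multiplying A(p - q) = 0 by the adjugate
   gives det * (p - q) = 0. *)
lemma inj_lin:
  assumes det: "a * d - b * c \<noteq> 0"
  shows "inj (lin a b c d)"
proof (rule injI)
  fix p q assume "lin a b c d p = lin a b c d q"
  then have e1: "a * (fst p - fst q) + b * (snd p - snd q) = 0"
        and e2: "c * (fst p - fst q) + d * (snd p - snd q) = 0"
    by (simp_all add: lin_def prod_eq_iff algebra_simps)
  have "(a * d - b * c) * (fst p - fst q)
          = d * (a * (fst p - fst q) + b * (snd p - snd q)) - b * (c * (fst p - fst q) + d * (snd p - snd q))"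
   and "(a * d - b * c) * (snd p - snd q)
          = a * (c * (fst p - fst q) + d * (snd p - snd q)) - c * (a * (fst p - fst q) + b * (snd p - snd q))"
    by (simp_all add: algebra_simps)
  with e1 e2 have "(a * d - b * c) * (fst p - fst q) = 0" "(a * d - b * c) * (snd p - snd q) = 0"
    by simp_all
  with det show "p = q" by (simp add: prod_eq_iff)
qed

definition realises :: "(int \<times> int \<Rightarrow> int \<times> int) \<Rightarrow> (dir \<Rightarrow> dir) \<Rightarrow> bool" where
  "realises A \<delta> \<longleftrightarrow> inj A \<and> (\<forall>p q. A (p + q) = A p + A q) \<and> (\<forall>x. A (vec x) = vec (\<delta> x))"

lemma realises_lin:
  assumes "a * d - b * c \<noteq> 0"
    and "lin a b c d (vec U) = vec (\<delta> U)" "lin a b c d (vec D) = vec (\<delta> D)"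
    and "lin a b c d (vec R) = vec (\<delta> R)" "lin a b c d (vec L) = vec (\<delta> L)"
  shows "realises (lin a b c d) \<delta>"
proof -
  have "lin a b c d (vec x) = vec (\<delta> x)" for x
    using assms by (cases x) simp_all
  then show ?thesis
    using inj_lin[OF assms(1)] by (simp add: realises_def lin_add)
qed

lemma realises_add: "realises A \<delta> \<Longrightarrow> A (p + q) = A p + A q"
  unfolding realises_def by blast

lemma realises_vec: "realises A \<delta> \<Longrightarrow> A (vec x) = vec (\<delta> x)"
  by (simp add: realises_def)

lemma realises_zero:
  assumes "realises A \<delta>"
  shows "A (0, 0) = (0, 0)"
proof -
  have "A 0 + A 0 = A 0 + 0" using realises_add[OF assms, of 0 0] by simp
  then show ?thesis by (simp add: zero_prod_def)
qed

lemma path_pts_map_shifted: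
  assumes "realises A \<delta>"
  shows "path_pts (p + A q) (map \<delta> w) = map (\<lambda>r. p + A r) (path_pts q w)"
proof (induction w arbitrary: q)
  case (Cons x w)
  have "step (p + A q) (\<delta> x) = p + A (step q x)"
    by (simp add: step_def add.assoc realises_add[OF assms] realises_vec[OF assms])
  then show ?case
    using Cons.IH by (simp add: path_pts_Cons del: path_pts.simps(2))
qed simp

lemma path_pts_map:
  assumes "realises A \<delta>"
  shows "path_pts p (map \<delta> w) = map (\<lambda>r. p + A r) (path_pts (0, 0) w)"
proof -
  have "p + A (0, 0) = p" by (cases p) (simp add: realises_zero[OF assms])
  then show ?thesis using path_pts_map_shifted[OF assms, of p "(0, 0)" w] by simp
qed

lemma realises_o: "realises (lin 0 1 1 0) delta_o"
  by (rule realises_lin) (simp_all add: lin_def)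
lemma realises_a: "realises (lin 0 (-1) (-1) 0) delta_a"
  by (rule realises_lin) (simp_all add: lin_def)
lemma realises_g: "realises (lin 0 (-1) 1 0) delta_g"
  by (rule realises_lin) (simp_all add: lin_def)
lemma realises_x: "realises (lin 0 1 (-1) 0) delta_x"
  by (rule realises_lin) (simp_all add: lin_def)
lemma realises_f: "realises (lin (-1) 0 0 (-1)) delta_f"
  by (rule realises_lin) (simp_all add: lin_def)
lemma realises_m: "realises (lin 1 0 0 (-1)) delta_m"
  by (rule realises_lin) (simp_all add: lin_def)
lemma realises_id: "realises (lin 1 0 0 1) id"
  by (rule realises_lin) (simp_all add: lin_def)

definition block :: "int \<Rightarrow> int \<Rightarrow> int \<Rightarrow> (int \<times> int) set" where
  "block x y s = {x..<x + s} \<times> {y..<y + s}"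

lemma card_block: "card (block x y s) = nat s * nat s"
  by (simp add: block_def card_cartesian_product)

lemma traces_ham_block:
  "traces_ham m w a b \<longleftrightarrow>
     (let ps = path_pts a w in distinct ps \<and> set ps = block 0 0 (int m) \<and> last ps = b)"
  by (simp add: traces_ham_def block_def)

lemma distinct_fills:
  assumes "distinct ps" "set ps \<subseteq> S" "finite S" "length ps = card S"
  shows "set ps = S"
  using assms by (metis card_subset_eq distinct_card)

lemma quadrants_disjoint:
  "block 0 0 s \<inter> block 0 s s = {}" "block 0 0 s \<inter> block s s s = {}"
  "block 0 0 s \<inter> block s 0 s = {}" "block 0 s s \<inter> block s s s = {}"
  "block 0 s s \<inter> block s 0 s = {}" "block s s s \<inter> block s 0 s = {}"
  by (auto simp: block_def)

lemma quadrant_assembly: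
  fixes N :: nat
  defines "e \<equiv> (int N - 1, 0)"
  assumes ham: "traces_ham N h (0, 0) e"
    and link: "p2 = step (p1 + A1 e) U" "p3 = step (p2 + A2 e) R" "p4 = step (p3 + A3 e) D"
    and sym: "realises A1 \<delta>1" "realises A2 \<delta>2" "realises A3 \<delta>3" "realises A4 \<delta>4"
    and quad1: "\<And>q. q \<in> block 0 0 (int N) \<Longrightarrow> p1 + A1 q \<in> block 0 0 (int N)"
    and quad2: "\<And>q. q \<in> block 0 0 (int N) \<Longrightarrow> p2 + A2 q \<in> block 0 (int N) (int N)"
    and quad3: "\<And>q. q \<in> block 0 0 (int N) \<Longrightarrow> p3 + A3 q \<in> block (int N) (int N) (int N)"
    and quad4: "\<And>q. q \<in> block 0 0 (int N) \<Longrightarrow> p4 + A4 q \<in> block (int N) 0 (int N)"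
    and end_point: "b = p4 + A4 e"
  shows "traces_ham (2 * N) (map \<delta>1 h @ [U] @ map \<delta>2 h @ [R] @ map \<delta>3 h @ [D] @ map \<delta>4 h)
           p1 b"
proof -
  define H where "H = path_pts (0, 0) h"
  have H: "distinct H" "set H = block 0 0 (int N)" "last H = e" "H \<noteq> []"
    using ham by (simp_all add: H_def traces_ham_block Let_def path_pts_not_Nil)
  define T1 T2 T3 T4 where "T1 r = p1 + A1 r" and "T2 r = p2 + A2 r"
    and "T3 r = p3 + A3 r" and "T4 r = p4 + A4 r" for r
  have path: "path_pts p1 (map \<delta>1 h @ [U] @ map \<delta>2 h @ [R] @ map \<delta>3 h @ [D] @ map \<delta>4 h)
      = map T1 H @ map T2 H @ map T3 H @ map T4 H"
    using H(3,4) link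
    by (simp add: path_pts_append path_pts_map[OF sym(1)] path_pts_map[OF sym(2)]
        path_pts_map[OF sym(3)] path_pts_map[OF sym(4)] last_map H_def T1_def T2_def T3_def T4_def)
  have sets: "set (map T1 H) \<subseteq> block 0 0 (int N)" "set (map T2 H) \<subseteq> block 0 (int N) (int N)"
    "set (map T3 H) \<subseteq> block (int N) (int N) (int N)" "set (map T4 H) \<subseteq> block (int N) 0 (int N)"
    using quad1 quad2 quad3 quad4 by (auto simp: H(2) T1_def T2_def T3_def T4_def)
  have "inj A1" "inj A2" "inj A3" "inj A4"
    using sym by (simp_all add: realises_def)
  then have "inj T1" "inj T2" "inj T3" "inj T4"
    by (auto simp: inj_def T1_def T2_def T3_def T4_def)
  then have "distinct (map T1 H)" "distinct (map T2 H)" "distinct (map T3 H)" "distinct (map T4 H)"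
    using H(1) by (auto simp: distinct_map intro: inj_on_subset[OF _ subset_UNIV])
  moreover have "set (map T1 H) \<inter> set (map T2 H) = {}" "set (map T1 H) \<inter> set (map T3 H) = {}"
    "set (map T1 H) \<inter> set (map T4 H) = {}" "set (map T2 H) \<inter> set (map T3 H) = {}"
    "set (map T2 H) \<inter> set (map T4 H) = {}" "set (map T3 H) \<inter> set (map T4 H) = {}"
    using sets quadrants_disjoint[of "int N"] by blast+
  ultimately have dist: "distinct (map T1 H @ map T2 H @ map T3 H @ map T4 H)"
    by (simp add: Int_Un_distrib)
  have cover: "set (map T1 H @ map T2 H @ map T3 H @ map T4 H) \<subseteq> block 0 0 (2 * int N)"
    using sets by (auto simp: block_def)
  have "length (map T1 H @ map T2 H @ map T3 H @ map T4 H) = card (block 0 0 (2 * int N))"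
    using distinct_card[OF H(1)] by (simp add: H(2) card_block nat_mult_distrib)
  then have fills: "set (map T1 H @ map T2 H @ map T3 H @ map T4 H) = block 0 0 (2 * int N)"
    using distinct_fills[OF dist cover] by (simp add: block_def)
  have "last (map T1 H @ map T2 H @ map T3 H @ map T4 H) = b"
    using H(3,4) end_point by (simp add: last_map T4_def)
  with dist fills show ?thesis
    unfolding traces_ham_block Let_def path by simp
qed

(* Here and below, the connection points of the assembly are fixed by solving the link equations
   with refl, after which the quadrant conditions are linear arithmetic. *)
lemma hilbert_path:
  fixes n :: nat
  defines "N \<equiv> (2::nat) ^ n"
  shows "traces_ham N (hilb n) (0, 0) (int N - 1, 0)"
  unfolding N_def
proof (induction n)
  case 0
  show ?case by (auto simp: traces_ham_def)
next
  case (Suc n)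
  have "hilb (Suc n) = map delta_o (hilb n) @ [U] @ map id (hilb n) @ [R] @ map id (hilb n) @ [D]
                       @ map delta_a (hilb n)"
    by simp
  moreover have "traces_ham (2 * 2 ^ n) \<dots> (0, 0) (2 * int (2 ^ n) - 1, 0)"
    by (rule quadrant_assembly[OF Suc.IH _ _ _ realises_o realises_id realises_id realises_a],
        (rule refl)+) (auto simp: block_def lin_def step_def)
  ultimately show ?case by simp
qed

lemma moore_path:
  fixes n :: nat
  defines "N \<equiv> (2::nat) ^ n"
  shows "traces_ham (2 * N) (h1 n) (int N - 1, 0) (int N, 0)"
  unfolding h1_def Let_def N_def
  by (rule quadrant_assembly[OF hilbert_path _ _ _ realises_g realises_g realises_x realises_x],
      (rule refl)+) (auto simp: block_def lin_def step_def)

lemma h2_path: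
  fixes n :: nat
  defines "N \<equiv> (2::nat) ^ n"
  shows "traces_ham (2 * N) (h2 n) (int N - 1, int N - 1) (int N, int N - 1)"
proof -
  have "h2 n = map delta_f (hilb n) @ [U] @ map id (hilb n) @ [R] @ map id (hilb n) @ [D]
               @ map delta_f (hilb n)"
    by (simp add: h2_def Let_def)
  moreover have "traces_ham (2 * N) \<dots> (int N - 1, int N - 1) (int N, int N - 1)"
    unfolding N_def
    by (rule quadrant_assembly[OF hilbert_path _ _ _ realises_f realises_id realises_id realises_f],
        (rule refl)+) (auto simp: block_def lin_def step_def)
  ultimately show ?thesis by simp
qed

lemma h3_path:
  fixes n :: nat
  defines "N \<equiv> (2::nat) ^ n"
  shows "traces_ham (2 * N) (h3 n) (0, int N - 1) (2 * int N - 1, int N - 1)"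
  unfolding h3_def Let_def N_def
  by (rule quadrant_assembly[OF hilbert_path _ _ _ realises_m realises_g realises_x realises_m],
      (rule refl)+) (auto simp: block_def lin_def step_def)

lemma h4_path:
  fixes n :: nat
  defines "N \<equiv> (2::nat) ^ n"
  shows "traces_ham (2 * N) (h4 n) (0, 0) (int N, int N - 1)"
proof -
  have "h4 n = map delta_o (hilb n) @ [U] @ map id (hilb n) @ [R] @ map id (hilb n) @ [D]
               @ map delta_f (hilb n)"
    by (simp add: h4_def Let_def)
  moreover have "traces_ham (2 * N) \<dots> (0, 0) (int N, int N - 1)"
    unfolding N_def
    by (rule quadrant_assembly[OF hilbert_path _ _ _ realises_o realises_id realises_id realises_f],
        (rule refl)+) (auto simp: block_def lin_def step_def)
  ultimately show ?thesis by simp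
qed

lemma h5_path:
  fixes n :: nat
  defines "N \<equiv> (2::nat) ^ n"
  shows "traces_ham (2 * N) (h5 n) (0, int N - 1) (int N, 0)"
  unfolding h5_def Let_def N_def
  by (rule quadrant_assembly[OF hilbert_path _ _ _ realises_m realises_g realises_x realises_x],
      (rule refl)+) (auto simp: block_def lin_def step_def)

theorem mainTheorem1:
  fixes n :: nat
  defines "N \<equiv> (2::nat) ^ n"
  shows "traces_ham (2*N) (h1 n) (int N - 1, 0) (int N, 0)
       \<and> traces_ham (2*N) (h2 n) (int N - 1, int N - 1) (int N, int N - 1)
       \<and> traces_ham (2*N) (h3 n) (0, int N - 1) (2 * int N - 1, int N - 1)
       \<and> traces_ham (2*N) (h4 n) (0, 0) (int N, int N - 1)
       \<and> traces_ham (2*N) (h5 n) (0, int N - 1) (int N, 0)"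
  unfolding N_def using moore_path h2_path h3_path h4_path h5_path by blast

end
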